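(* Let $S$ be a set of primes and $(a_{S,n})_{n\ge1}$ a sequence. Then \[ a_{S,n}=\prod_{p\in S}\frac{1}{p-1}\left(\frac{p+1}{|n|_p}-2\right)\quad\text{for all } n\ge1 \] if and only if \[ \sum_{n\ge1}\frac{a_{S,n}}{n^s}=\zeta(s)\prod_{p\in S}\frac{p^s+1}{p^s-p} \] (as Dirichlet series, each factor $\frac{p^s+1}{p^s-p}=\frac{1+p^{-s}}{1-p^{1-s}}$ being expanded as a Dirichlet series in $p^{-s}$).
   Context: $|\cdot|_p$ is the $p$-adic absolute value, so $|n|_p^{-1}$ is the largest power of $p$ dividing $n$. $\zeta(s)=\sum_{n\ge1}n^{-s}$. *)

theory Defs
  imports "HOL-Computational_Algebra.Computational_Algebra"
begin

definition padic_abs :: "nat \<Rightarrow> nat \<Rightarrow> real" where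
  "padic_abs p n = inverse (real p ^ multiplicity p n)"

text \<open>Formal Dirichlet series with real coefficients are represented by their
coefficient sequences nat \<Rightarrow> real (only indices n \<ge> 1 are meaningful).
Product of Dirichlet series = Dirichlet convolution.\<close>
definition dconv :: "(nat \<Rightarrow> real) \<Rightarrow> (nat \<Rightarrow> real) \<Rightarrow> nat \<Rightarrow> real" where
  "dconv f g n = (\<Sum>d | d dvd n. f d * g (n div d))"

definition dunit :: "nat \<Rightarrow> real" where
  "dunit n = (if n = 1 then 1 else 0)"

definition dzeta :: "nat \<Rightarrow> real" where
  "dzeta n = 1"

definition dprod :: "(nat \<Rightarrow> nat \<Rightarrow> real) \<Rightarrow> nat set \<Rightarrow> nat \<Rightarrow> real" where
  "dprod F T = foldr (\<lambda>p acc. dconv (F p) acc) (sorted_list_of_set T) dunit"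

text \<open>Product over a possibly infinite set S of primes of Dirichlet series each of
the form 1 + (terms in p^(-s), p^(-2s), ...): the n-th coefficient is the n-th coefficient
of the finite partial product over the primes p \<in> S with p \<le> n (the factors with
p > n do not affect coefficients of index \<le> n).\<close>
definition dprod_inf :: "(nat \<Rightarrow> nat \<Rightarrow> real) \<Rightarrow> nat set \<Rightarrow> nat \<Rightarrow> real" where
  "dprod_inf F S n = dprod F {p \<in> S. p \<le> n} n"

text \<open>Dirichlet series 1 + p^(-s).\<close>
definition numer_ser :: "nat \<Rightarrow> nat \<Rightarrow> real" where
  "numer_ser p n = (if n = 1 then 1 else if n = p then 1 else 0)"

text \<open>Dirichlet series 1/(1 - p^(1-s)) = sum_k p^k (p^k)^(-s), i.e. the inverse of
1 - p * p^(-s).\<close>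
definition geom_ser :: "nat \<Rightarrow> nat \<Rightarrow> real" where
  "geom_ser p n = (if \<exists>k. n = p ^ k then real p ^ (THE k. n = p ^ k) else 0)"

text \<open>Dirichlet series (p^s+1)/(p^s-p) = (1+p^(-s))/(1-p^(1-s)).\<close>
definition factor_ser :: "nat \<Rightarrow> nat \<Rightarrow> real" where
  "factor_ser p = dconv (numer_ser p) (geom_ser p)"

end

theory Submission
  imports Defs
begin

text \<open>Each factor \<open>(1 + p^-s) / (1 - p^(1-s))\<close> is a Dirichlet series supported on the
powers of \<open>p\<close>, with coefficient \<open>p^j + p^(j-1)\<close> at \<open>p^j\<close> for \<open>j \<ge> 1\<close>. Convolving it with a
coefficient sequence that does not change when \<open>n\<close> is divided by powers of \<open>p\<close> multiplies
the \<open>n\<close>-th coefficient by the partial sum of these coefficients up to \<open>v = v_p(n)\<close>, which is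
\<open>((p + 1) p^v - 2) / (p - 1)\<close>. Starting from \<open>\<zeta>\<close>, whose coefficients are all 1, and adding
the primes one at a time yields the product formula; primes not dividing \<open>n\<close> contribute the
factor 1, and primes larger than \<open>n\<close> do not affect the \<open>n\<close>-th coefficient.\<close>

lemma dconv_0 [simp]: "dconv f g 0 = 0"
  by (simp add: dconv_def)

lemma dconv_commute: "dconv f g = dconv g f"
proof
  fix n :: nat
  show "dconv f g n = dconv g f n"
  proof (cases "n = 0")
    case False
    show ?thesis unfolding dconv_def
      by (rule sum.reindex_bij_witness[of _ "\<lambda>d. n div d" "\<lambda>d. n div d"])
         (use False in \<open>auto simp: mult.commute elim!: dvdE\<close>)
  qed simp
qed

lemma dconv_assoc: "dconv f (dconv g h) = dconv (dconv f g) h"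
proof
  fix n :: nat
  show "dconv f (dconv g h) n = dconv (dconv f g) h n"
  proof (cases "n = 0")
    case False
    have fin: "finite {d. d dvd m}" if "m dvd n" for m :: nat
      using False that by (auto intro: finite_divisors_nat)
    have "dconv f (dconv g h) n
        = (\<Sum>(d, e) \<in> Sigma {d. d dvd n} (\<lambda>d. {e. e dvd n div d}). f d * (g e * h (n div d div e)))"
      unfolding dconv_def sum_distrib_left
      by (rule sum.Sigma) (use fin in \<open>auto intro: dvd_div_eq_mult\<close>)
    also have "\<dots> = (\<Sum>(m, d) \<in> Sigma {m. m dvd n} (\<lambda>m. {d. d dvd m}). f d * g (m div d) * h (n div m))"
      by (rule sum.reindex_bij_witness[of _ "\<lambda>(m, d). (d, m div d)" "\<lambda>(d, e). (d * e, d)"])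
         (use False in \<open>auto simp: div_mult2_eq elim!: dvdE\<close>)
    also have "\<dots> = dconv (dconv f g) h n"
      unfolding dconv_def sum_distrib_right
      by (rule sum.Sigma[symmetric]) (use fin in auto)
    finally show ?thesis .
  qed simp
qed

lemma dconv_left_commute: "dconv f (dconv g h) = dconv g (dconv f h)"
  by (metis dconv_assoc dconv_commute)

lemma dconv_dunit_left:
  assumes "n > 0"
  shows "dconv dunit f n = f n"
proof -
  have "dconv dunit f n = (\<Sum>d | d dvd n. if d = 1 then f (n div d) else 0)"
    unfolding dconv_def dunit_def by (intro sum.cong) auto
  also have "\<dots> = f n"
    using assms by (simp add: sum.delta finite_divisors_nat)
  finally show ?thesis .
qed

lemma dprod_empty [simp]: "dprod F {} = dunit"
  by (simp add: dprod_def)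

lemma dprod_insert:
  assumes "finite T" "p \<notin> T"
  shows "dprod F (insert p T) = dconv (F p) (dprod F T)"
proof -
  have foldr_insort: "foldr (\<lambda>p. dconv (F p)) (insort p xs) dunit
      = dconv (F p) (foldr (\<lambda>p. dconv (F p)) xs dunit)" for xs
    by (induction xs) (auto simp: dconv_left_commute)
  show ?thesis
    using assms by (simp add: dprod_def sorted_list_of_set_insert_remove foldr_insort)
qed

lemma dconv_power_supported:
  fixes p n :: nat
  assumes p: "p > 1" and n: "n > 0" and f: "\<And>m. m \<notin> range ((^) p) \<Longrightarrow> f m = 0"
  shows "dconv f g n = (\<Sum>j\<le>multiplicity p n. f (p ^ j) * g (n div p ^ j))"
proof -
  have "dconv f g n = (\<Sum>d \<in> (\<lambda>j. p ^ j) ` {..multiplicity p n}. f d * g (n div d))"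
    unfolding dconv_def
  proof (rule sum.mono_neutral_right)
    show "finite {d. d dvd n}" using n by (simp add: finite_divisors_nat)
    show "(\<lambda>j. p ^ j) ` {..multiplicity p n} \<subseteq> {d. d dvd n}"
      by (auto intro: multiplicity_dvd')
    show "\<forall>d\<in>{d. d dvd n} - (\<lambda>j. p ^ j) ` {..multiplicity p n}. f d * g (n div d) = 0"
    proof
      fix d assume d: "d \<in> {d. d dvd n} - (\<lambda>j. p ^ j) ` {..multiplicity p n}"
      have "d \<notin> range ((^) p)"
      proof
        assume "d \<in> range ((^) p)"
        then obtain j where j: "d = p ^ j" by blast
        then have "j \<le> multiplicity p n"
          using d n p by (intro multiplicity_geI) auto
        with d j show False by auto
      qed
      then show "f d * g (n div d) = 0" by (simp add: f)
    qed
  qed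
  also have "\<dots> = (\<Sum>j\<le>multiplicity p n. f (p ^ j) * g (n div p ^ j))"
    using p by (subst sum.reindex) (auto simp: inj_on_def)
  finally show ?thesis .
qed

lemma numer_ser_eq_0: "m \<notin> range ((^) p) \<Longrightarrow> numer_ser p m = 0"
  unfolding numer_ser_def by (metis power_0 power_one_right rangeI)

lemma geom_ser_eq_0: "m \<notin> range ((^) p) \<Longrightarrow> geom_ser p m = 0"
  unfolding geom_ser_def by auto

lemma numer_ser_power: "p > 1 \<Longrightarrow> numer_ser p (p ^ j) = (if j \<le> 1 then 1 else 0)"
  using power_inject_exp[of p j 1] by (auto simp: numer_ser_def le_Suc_eq)

lemma geom_ser_power: "p > 1 \<Longrightarrow> geom_ser p (p ^ j) = real p ^ j"
  unfolding geom_ser_def by auto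

lemma factor_ser_eq_0:
  assumes p: "p > 1" and m: "m \<notin> range ((^) p)"
  shows "factor_ser p m = 0"
proof (cases "m = 0")
  case False
  have "geom_ser p (m div p ^ j) = 0" if "j \<le> multiplicity p m" for j
  proof (rule geom_ser_eq_0, rule notI)
    assume "m div p ^ j \<in> range ((^) p)"
    then obtain i where "m div p ^ j = p ^ i" by blast
    moreover have "p ^ j dvd m" using that by (rule multiplicity_dvd')
    ultimately have "m = p ^ (j + i)" by (metis dvd_mult_div_cancel power_add)
    with m show False by blast
  qed
  then show ?thesis
    using p False by (simp add: factor_ser_def dconv_power_supported numer_ser_eq_0)
qed (simp add: factor_ser_def)

lemma factor_ser_power:
  assumes p: "p > 1"
  shows "factor_ser p (p ^ k) = real p ^ k + (if k = 0 then 0 else real p ^ (k - 1))"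
proof -
  have "factor_ser p (p ^ k) = (\<Sum>j\<le>k. numer_ser p (p ^ j) * geom_ser p (p ^ k div p ^ j))"
    using p unfolding factor_ser_def
    by (simp add: dconv_power_supported numer_ser_eq_0 multiplicity_same_power')
  also have "\<dots> = (\<Sum>j\<le>k. (if j \<le> 1 then real p ^ (k - j) else 0))"
    using p by (intro sum.cong refl) (simp add: numer_ser_power power_diff_power_eq geom_ser_power)
  also have "\<dots> = (\<Sum>j \<in> {j\<in>{..k}. j \<le> 1}. real p ^ (k - j))"
    by (simp only: sum.inter_filter[OF finite_atMost])
  also have "\<dots> = real p ^ k + (if k = 0 then 0 else real p ^ (k - 1))"
  proof (cases "k = 0")
    case True
    then have "{j\<in>{..k}. j \<le> 1} = {0}" by auto
    then show ?thesis using True by simp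
  next
    case False
    then have "{j\<in>{..k}. j \<le> 1} = {0, 1}" by auto
    then show ?thesis using False by simp
  qed
  finally show ?thesis .
qed

text \<open>The coefficient of \<open>\<zeta>(s) (p^s + 1) / (p^s - p)\<close> at \<open>p^k\<close>.\<close>

definition zeta_factor_coeff :: "nat \<Rightarrow> nat \<Rightarrow> real" where
  "zeta_factor_coeff p k = 1 / (real p - 1) * ((real p + 1) * real p ^ k - 2)"

lemma zeta_factor_coeff_0 [simp]: "p > 1 \<Longrightarrow> zeta_factor_coeff p 0 = 1"
  by (simp add: zeta_factor_coeff_def)

lemma sum_factor_ser_powers:
  assumes p: "p > 1"
  shows "(\<Sum>j\<le>k. factor_ser p (p ^ j)) = zeta_factor_coeff p k"
proof (induction k)
  case (Suc k)
  have "real p - 1 \<noteq> 0" using p by simp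
  with Suc show ?case
    using p by (simp add: factor_ser_power zeta_factor_coeff_def field_simps)
qed (use p factor_ser_power[OF p, of 0] in simp)

lemma dconv_factor_ser:
  assumes p: "p > 1" and n: "n > 0"
    and Z: "\<And>j. j \<le> multiplicity p n \<Longrightarrow> Z (n div p ^ j) = Z n"
  shows "dconv (factor_ser p) Z n = zeta_factor_coeff p (multiplicity p n) * Z n"
proof -
  have "dconv (factor_ser p) Z n = (\<Sum>j\<le>multiplicity p n. factor_ser p (p ^ j) * Z n)"
    using p n Z by (simp add: dconv_power_supported factor_ser_eq_0)
  then show ?thesis
    using p by (simp add: sum_distrib_right[symmetric] sum_factor_ser_powers)
qed

lemma multiplicity_div_coprime:
  fixes q d n :: "'a :: factorial_semiring"
  assumes "prime_elem q" "d dvd n" "n \<noteq> 0" "\<not> q dvd d"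
  shows "multiplicity q (n div d) = multiplicity q n"
proof -
  have "n = d * (n div d)" using assms(2) by simp
  moreover have "d \<noteq> 0" "n div d \<noteq> 0" using assms(2,3) by auto
  ultimately show ?thesis
    using assms(1,4) prime_elem_multiplicity_mult_distrib not_dvd_imp_multiplicity_0
    by (metis add_0)
qed

lemma dconv_dzeta_dprod_factor_ser:
  assumes "finite T" "\<forall>q\<in>T. prime q" "n > 0"
  shows "dconv dzeta (dprod factor_ser T) n = (\<Prod>q\<in>T. zeta_factor_coeff q (multiplicity q n))"
  using assms
proof (induction T arbitrary: n rule: finite_induct)
  case empty
  then show ?case by (simp add: dconv_commute[of dzeta] dconv_dunit_left, simp add: dzeta_def)
next
  case (insert p T)
  have p: "prime p" using insert.prems by simp
  have "dconv dzeta (dprod factor_ser T) (n div p ^ j) = dconv dzeta (dprod factor_ser T) n"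
    if "j \<le> multiplicity p n" for j
  proof -
    have dvd: "p ^ j dvd n" using that by (rule multiplicity_dvd')
    have "multiplicity q (n div p ^ j) = multiplicity q n" if "q \<in> T" for q
    proof (rule multiplicity_div_coprime)
      have "prime q" "q \<noteq> p" using that insert.hyps insert.prems by auto
      then show "\<not> q dvd p ^ j"
        using p by (metis prime_dvd_power primes_dvd_imp_eq)
    qed (use that insert dvd in auto)
    moreover have "n div p ^ j > 0" using dvd insert.prems by (auto elim!: dvdE)
    ultimately show ?thesis using insert by simp
  qed
  then show ?case
    using insert p prime_gt_1_nat[OF p]
    by (simp add: dprod_insert dconv_left_commute[of dzeta] dconv_factor_ser)
qed

lemma dprod_factor_ser_large_primes:
  assumes "finite D" "finite T" "D \<inter> T = {}" "\<forall>q\<in>D. prime q \<and> q > m" "m > 0"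
  shows "dprod factor_ser (T \<union> D) m = dprod factor_ser T m"
  using assms
proof (induction D rule: finite_induct)
  case (insert q D)
  have "\<not> q dvd m" "q > 1" using insert.prems by (auto dest: dvd_imp_le prime_gt_1_nat)
  then have "dconv (factor_ser q) (dprod factor_ser (T \<union> D)) m = dprod factor_ser (T \<union> D) m"
    using dconv_factor_ser[of q m] insert.prems by (simp add: not_dvd_imp_multiplicity_0)
  with insert show ?case by (simp add: dprod_insert)
qed simp

text \<open>In \<^const>\<open>dprod_inf\<close> every index \<open>m\<close> is computed from its own truncation \<open>{p \<in> S. p \<le> m}\<close>;
for the divisors of \<open>n\<close> all these truncations can be replaced by the one at \<open>n\<close>.\<close>

lemma dconv_dzeta_dprod_inf:
  assumes "\<forall>p\<in>S. prime p" "n > 0"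
  shows "dconv dzeta (dprod_inf factor_ser S) n = dconv dzeta (dprod factor_ser {p\<in>S. p \<le> n}) n"
  unfolding dconv_def
proof (intro sum.cong refl)
  fix d assume "d \<in> {d. d dvd n}"
  then have m: "n div d > 0" "n div d \<le> n" using assms(2) by (auto elim!: dvdE)
  have "{p\<in>S. p \<le> n} = {p\<in>S. p \<le> n div d} \<union> {p\<in>S. n div d < p \<and> p \<le> n}"
    using m by (auto intro: le_trans[OF _ m(2)])
  then have "dprod factor_ser {p\<in>S. p \<le> n} (n div d) = dprod_inf factor_ser S (n div d)"
    using assms m unfolding dprod_inf_def
    by (simp only:) (rule dprod_factor_ser_large_primes; auto)
  then show "dzeta d * dprod_inf factor_ser S (n div d) = dzeta d * dprod factor_ser {p\<in>S. p \<le> n} (n div d)"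
    by simp
qed

lemma dconv_dzeta_dprod_inf_factor_ser:
  assumes "\<forall>p\<in>S. prime p" "n > 0"
  shows "dconv dzeta (dprod_inf factor_ser S) n
       = (\<Prod>p\<in>{p\<in>S. p dvd n}. zeta_factor_coeff p (multiplicity p n))"
proof -
  have "dconv dzeta (dprod_inf factor_ser S) n
      = (\<Prod>p\<in>{p\<in>S. p \<le> n}. zeta_factor_coeff p (multiplicity p n))"
    using assms by (simp add: dconv_dzeta_dprod_inf dconv_dzeta_dprod_factor_ser)
  also have "\<dots> = (\<Prod>p\<in>{p\<in>S. p dvd n}. zeta_factor_coeff p (multiplicity p n))"
  proof (rule prod.mono_neutral_right)
    show "\<forall>p\<in>{p\<in>S. p \<le> n} - {p\<in>S. p dvd n}. zeta_factor_coeff p (multiplicity p n) = 1"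
      using assms by (auto simp: not_dvd_imp_multiplicity_0 intro!: zeta_factor_coeff_0 prime_gt_1_nat)
  qed (use assms in \<open>auto dest: dvd_imp_le\<close>)
  finally show ?thesis .
qed

lemma zeta_factor_coeff_padic_abs:
  "zeta_factor_coeff p (multiplicity p n) = 1 / (real p - 1) * ((real p + 1) / padic_abs p n - 2)"
  by (simp add: zeta_factor_coeff_def padic_abs_def divide_inverse)

theorem lemma3p4:
  fixes S :: "nat set" and a :: "nat \<Rightarrow> real"
  assumes "\<forall>p\<in>S. prime p"
  shows "(\<forall>n\<ge>1. a n = (\<Prod>p\<in>{p\<in>S. p dvd n}.
              (1 / (real p - 1)) * ((real p + 1) / padic_abs p n - 2)))
     \<longleftrightarrow> (\<forall>n\<ge>1. a n = dconv dzeta (dprod_inf factor_ser S) n)"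
  using dconv_dzeta_dprod_inf_factor_ser[OF assms]
  by (simp add: zeta_factor_coeff_padic_abs)

end
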